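(* Let $X$ be an orthomodular lattice. The set $\mathrm{End}(X)=\mathbf{OMLatGal}(X,X)$, with composition in $\mathbf{OMLatGal}$ as multiplication, the identity as unit, the dagger $(s_*,s^* )^\dagger=(s^*,s_* )$ as involution, and $[s]=\ker(s)\circ\ker(s)^\dagger$, is a Foulis semigroup. Explicitly, for $s\in\mathrm{End}(X)$ and $x\in X$, $[s]_*(x)=[s]^*(x)=s^*(1)^\perp\vee(s^*(1)\wedge x^\perp)$, i.e. $[s]_*(x)=s^*(1)\supset x^\perp=(x\,\&\,s^*(1))^\perp$, where $a\supset b=a^\perp\vee(a\wedge b)$ and $a\,\&\,b=b\wedge(b^\perp\vee a)$.
   Context: An orthomodular lattice is a bounded lattice with an order-reversing involution $x\mapsto x^\perp$ such that $x\wedge x^\perp=0$, $x\vee x^\perp=1$, and $x\le y$ implies $y=x\vee(x^\perp\wedge y)$. $\mathbf{OMLatGal}$: objects orthomodular lattices; morphisms $f:X\to Y$ are pairs $(f_*,f^* )$ of order-reversing maps $f_*:X\to Y$, $f^*:Y\to X$ with $y\le f_*(x)\iff x\le f^*(y)$; identity has both components $x\mapsto x^\perp$; $(g\circ f)_*=g_*\circ\perp\circ f_*$, $(g\circ f)^*=f^*\circ\perp\circ g^*$; dagger $(f_*,f^* )^\dagger=(f^*,f_* )$. It is a dagger kernel category whose kernel of $f$ is the morphism $k:\downarrow k\to X$ with $k=f^*(1)$, where $\downarrow a=\{u\le a\}$ with complement $a\wedge u^\perp$ and $a_*(u)=u^\perp$, $a^*(x)=a\wedge x^\perp$. A Foulis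 semigroup is a monoid $(S,\cdot,1)$ with maps $(-)^\dagger:S\to S$ and $[-]:S\to S$ such that: (1) $1^\dagger=1$, $(s\cdot t)^\dagger=t^\dagger\cdot s^\dagger$, $s^{\dagger\dagger}=s$; (2) $[s]\cdot[s]=[s]=[s]^\dagger$; (3) $0:=[1]$ satisfies $0\cdot s=0=s\cdot 0$ for all $s$; (4) for all $s,x$: $s\cdot x=0$ iff $x=[s]\cdot y$ for some $y\in S$. *)

theory Defs
  imports Main
begin

unbundle lattice_syntax

definition orthomodular :: "('a::bounded_lattice \<Rightarrow> 'a) \<Rightarrow> bool" where
  "orthomodular perp \<longleftrightarrow>
     (\<forall>x y. x \<le> y \<longrightarrow> perp y \<le> perp x) \<and>
     (\<forall>x. perp (perp x) = x) \<and>
     (\<forall>x. x \<sqinter> perp x = bot) \<and>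
     (\<forall>x. x \<squnion> perp x = top) \<and>
     (\<forall>x y. x \<le> y \<longrightarrow> y = x \<squnion> (perp x \<sqinter> y))"

text \<open>Morphisms of OMLatGal between lattices on types 'a and 'b: pairs (f_*, f^*).\<close>
definition omgal_hom :: "(('a::order \<Rightarrow> 'b::order) \<times> ('b \<Rightarrow> 'a)) set" where
  "omgal_hom = {(fl, fu). antimono fl \<and> antimono fu \<and>
                  (\<forall>x y. y \<le> fl x \<longleftrightarrow> x \<le> fu y)}"

abbreviation omgal_End :: "(('a::order \<Rightarrow> 'a) \<times> ('a \<Rightarrow> 'a)) set" where
  "omgal_End \<equiv> omgal_hom"

text \<open>Composition g \<circ> f in OMLatGal, where c is the orthocomplement of the middle object:
  (g\<circ>f)_* = g_* \<circ> c \<circ> f_*,  (g\<circ>f)^* = f^* \<circ> c \<circ> g^*.\<close>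
definition omgal_comp ::
  "('b \<Rightarrow> 'b) \<Rightarrow> ('b \<Rightarrow> 'c) \<times> ('c \<Rightarrow> 'b) \<Rightarrow> ('a \<Rightarrow> 'b) \<times> ('b \<Rightarrow> 'a)
     \<Rightarrow> ('a \<Rightarrow> 'c) \<times> ('c \<Rightarrow> 'a)" where
  "omgal_comp c g f = (fst g \<circ> c \<circ> fst f, snd f \<circ> c \<circ> snd g)"

definition omgal_id :: "('a \<Rightarrow> 'a) \<Rightarrow> ('a \<Rightarrow> 'a) \<times> ('a \<Rightarrow> 'a)" where
  "omgal_id perp = (perp, perp)"

definition omgal_dagger :: "('a \<Rightarrow> 'b) \<times> ('b \<Rightarrow> 'a) \<Rightarrow> ('b \<Rightarrow> 'a) \<times> ('a \<Rightarrow> 'b)" where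
  "omgal_dagger f = (snd f, fst f)"

text \<open>The kernel of f : X \<rightarrow> Y is k : \<down>k \<rightarrow> X with k = f^*(1), k_*(u) = u^\<perp>,
  k^*(x) = k \<sqinter> x^\<perp>. The object \<down>k is represented by the elements of 'a below k,
  with orthocomplement u \<mapsto> k \<sqinter> u^\<perp>.\<close>
definition omgal_ker_elem :: "('a::bounded_lattice \<Rightarrow> 'b) \<times> ('b::bounded_lattice \<Rightarrow> 'a) \<Rightarrow> 'a" where
  "omgal_ker_elem f = snd f top"

definition downset_perp :: "('a::lattice \<Rightarrow> 'a) \<Rightarrow> 'a \<Rightarrow> 'a \<Rightarrow> 'a" where
  "downset_perp perp k u = k \<sqinter> perp u"

definition omgal_ker ::
  "('a::bounded_lattice \<Rightarrow> 'a) \<Rightarrow> ('a \<Rightarrow> 'b) \<times> ('b::bounded_lattice \<Rightarrow> 'a)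
     \<Rightarrow> ('a \<Rightarrow> 'a) \<times> ('a \<Rightarrow> 'a)" where
  "omgal_ker perp f = (perp, \<lambda>x. omgal_ker_elem f \<sqinter> perp x)"

text \<open>[s] = ker(s) \<circ> ker(s)^\<dagger>, composed through the object \<down>k.\<close>
definition foulis_bracket ::
  "('a::bounded_lattice \<Rightarrow> 'a) \<Rightarrow> ('a \<Rightarrow> 'a) \<times> ('a \<Rightarrow> 'a) \<Rightarrow> ('a \<Rightarrow> 'a) \<times> ('a \<Rightarrow> 'a)" where
  "foulis_bracket perp s =
     omgal_comp (downset_perp perp (omgal_ker_elem s)) (omgal_ker perp s)
       (omgal_dagger (omgal_ker perp s))"

definition foulis_semigroup ::
  "'s set \<Rightarrow> ('s \<Rightarrow> 's \<Rightarrow> 's) \<Rightarrow> 's \<Rightarrow> ('s \<Rightarrow> 's) \<Rightarrow> ('s \<Rightarrow> 's) \<Rightarrow> bool" where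
  "foulis_semigroup S mult one dag br \<longleftrightarrow>
     \<comment> \<open>monoid\<close>
     one \<in> S \<and>
     (\<forall>s\<in>S. \<forall>t\<in>S. mult s t \<in> S) \<and>
     (\<forall>s\<in>S. \<forall>t\<in>S. \<forall>u\<in>S. mult (mult s t) u = mult s (mult t u)) \<and>
     (\<forall>s\<in>S. mult one s = s \<and> mult s one = s) \<and>
     (\<forall>s\<in>S. dag s \<in> S \<and> br s \<in> S) \<and>
     \<comment> \<open>(1) involution\<close>
     dag one = one \<and>
     (\<forall>s\<in>S. \<forall>t\<in>S. dag (mult s t) = mult (dag t) (dag s)) \<and>
     (\<forall>s\<in>S. dag (dag s) = s) \<and>
     \<comment> \<open>(2) projections\<close>
     (\<forall>s\<in>S. mult (br s) (br s) = br s \<and> br s = dag (br s)) \<and>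
     \<comment> \<open>(3) zero\<close>
     (\<forall>s\<in>S. mult (br one) s = br one \<and> mult s (br one) = br one) \<and>
     \<comment> \<open>(4)\<close>
     (\<forall>s\<in>S. \<forall>x\<in>S. mult s x = br one \<longleftrightarrow> (\<exists>y\<in>S. x = mult (br s) y))"

definition sasaki_imp :: "('a::lattice \<Rightarrow> 'a) \<Rightarrow> 'a \<Rightarrow> 'a \<Rightarrow> 'a" where
  "sasaki_imp perp a b = perp a \<squnion> (a \<sqinter> b)"

definition and_then :: "('a::lattice \<Rightarrow> 'a) \<Rightarrow> 'a \<Rightarrow> 'a \<Rightarrow> 'a" where
  "and_then perp a b = b \<sqinter> (perp b \<squnion> a)"

end

theory Submission
  imports Defs
begin

text \<open>
  Associativity of composition and the dagger laws hold for arbitrary pairs of maps;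
  closure of the morphisms under composition and the unit laws use only that the
  orthocomplement is an antitone involution.  The real content lies in the bracket:
  unfolding the definitions, both components of [s] are the Sasaki map
  x \<mapsto> k^\<perp> \<squnion> (k \<sqinter> x^\<perp>) with k = s^*(1).  Orthomodularity makes this map
  self-adjoint and idempotent after complementation, so [s] is a dagger projection, and
  [1] is the constant-top pair, which is the zero morphism.  For axiom (4) we show that
  s \<circ> x = 0 holds exactly when k^\<perp> \<le> x_*(1), that every x with this property is
  absorbed by [s] (x = [s] \<circ> x), and that every [s] \<circ> y has this property.
\<close>

section \<open>Galois pairs\<close>

text \<open>Antitonicity of the components is implied by the Galois condition alone.\<close>
lemma omgal_hom_iff:
  "f \<in> omgal_hom \<longleftrightarrow> (\<forall>x y. y \<le> fst f x \<longleftrightarrow> x \<le> snd f y)"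
proof
  assume "f \<in> omgal_hom"
  thus "\<forall>x y. y \<le> fst f x \<longleftrightarrow> x \<le> snd f y"
    by (cases f) (auto simp: omgal_hom_def)
next
  assume G: "\<forall>x y. y \<le> fst f x \<longleftrightarrow> x \<le> snd f y"
  have "antimono (fst f)"
  proof (rule antimonoI)
    fix x x' :: 'a assume "x \<le> x'"
    moreover have "x' \<le> snd f (fst f x')" using G by blast
    ultimately show "fst f x' \<le> fst f x" using G order_trans by blast
  qed
  moreover have "antimono (snd f)"
  proof (rule antimonoI)
    fix y y' :: 'b assume "y \<le> y'"
    moreover have "y' \<le> fst f (snd f y')" using G by blast
    ultimately show "snd f y' \<le> snd f y" using G order_trans by blast
  qed
  ultimately show "f \<in> omgal_hom" using G by (cases f) (auto simp: omgal_hom_def)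
qed

lemma omgal_hom_galois: "f \<in> omgal_hom \<Longrightarrow> y \<le> fst f x \<longleftrightarrow> x \<le> snd f y"
  by (simp add: omgal_hom_iff)

lemma omgal_hom_antitone: "f \<in> omgal_hom \<Longrightarrow> antimono (fst f) \<and> antimono (snd f)"
  by (cases f) (simp add: omgal_hom_def)

lemma omgal_hom_bot:
  fixes f :: "('a::bounded_lattice \<Rightarrow> 'b::bounded_lattice) \<times> ('b \<Rightarrow> 'a)"
  assumes "f \<in> omgal_hom"
  shows "fst f bot = top" "snd f bot = top"
  using omgal_hom_galois[OF assms, of top bot] omgal_hom_galois[OF assms, of bot top]
  by (simp_all add: top_unique)

lemma omgal_hom_top_le:
  fixes f :: "('a::order_top \<Rightarrow> 'b::order_top) \<times> ('b \<Rightarrow> 'a)"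
  assumes "f \<in> omgal_hom"
  shows "fst f top \<le> fst f x" "snd f top \<le> snd f y"
  using omgal_hom_antitone[OF assms] by (simp_all add: antimonoD)

lemma omgal_dagger_hom: "f \<in> omgal_hom \<Longrightarrow> omgal_dagger f \<in> omgal_hom"
  by (auto simp: omgal_hom_iff omgal_dagger_def)

lemma omgal_comp_assoc:
  "omgal_comp c (omgal_comp d h g) f = omgal_comp d h (omgal_comp c g f)"
  by (simp add: omgal_comp_def o_assoc)

lemma omgal_dagger_comp:
  "omgal_dagger (omgal_comp c g f) = omgal_comp c (omgal_dagger f) (omgal_dagger g)"
  by (simp add: omgal_dagger_def omgal_comp_def)

lemma omgal_dagger_dagger: "omgal_dagger (omgal_dagger f) = f"
  by (simp add: omgal_dagger_def)

lemma omgal_dagger_id: "omgal_dagger (omgal_id c) = omgal_id c"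
  by (simp add: omgal_dagger_def omgal_id_def)

section \<open>Orthomodular lattices\<close>

context
  fixes perp :: "'a::bounded_lattice \<Rightarrow> 'a"
  assumes OM: "orthomodular perp"
begin

lemma perp_antitone: "x \<le> y \<Longrightarrow> perp y \<le> perp x"
  using OM by (auto simp: orthomodular_def)

lemma perp_perp[simp]: "perp (perp x) = x"
  using OM by (auto simp: orthomodular_def)

lemma orthomodular_law: "x \<le> y \<Longrightarrow> y = x \<squnion> (perp x \<sqinter> y)"
  using OM by (auto simp: orthomodular_def)

lemma perp_le_perp_iff: "perp x \<le> perp y \<longleftrightarrow> y \<le> x"
  by (metis perp_antitone perp_perp)

lemma le_perp_iff: "x \<le> perp y \<longleftrightarrow> y \<le> perp x"
  by (metis perp_le_perp_iff perp_perp)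

lemma perp_inf: "perp (x \<sqinter> y) = perp x \<squnion> perp y"
proof (rule antisym)
  have "perp (perp x \<squnion> perp y) \<le> x \<sqinter> y"
    by (metis perp_antitone perp_perp inf.boundedI sup.cobounded1 sup.cobounded2)
  thus "perp (x \<sqinter> y) \<le> perp x \<squnion> perp y" by (metis perp_antitone perp_perp)
  show "perp x \<squnion> perp y \<le> perp (x \<sqinter> y)" by (simp add: perp_antitone)
qed

lemma perp_sup: "perp (x \<squnion> y) = perp x \<sqinter> perp y"
  by (metis perp_inf perp_perp)

lemma perp_top[simp]: "perp top = bot"
  by (metis bot.extremum perp_perp perp_le_perp_iff top.extremum_unique)

lemma perp_bot[simp]: "perp bot = top"
  by (metis perp_perp perp_top)

text \<open>The dual orthomodular law, obtained by complementing the orthomodular law.\<close>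
lemma orthomodular_law_dual: "y \<le> k \<Longrightarrow> y = k \<sqinter> (perp k \<squnion> y)"
proof -
  assume "y \<le> k"
  hence "perp y = perp k \<squnion> (k \<sqinter> perp y)"
    using orthomodular_law[OF perp_antitone] by fastforce
  hence "perp (perp y) = perp (perp k \<squnion> (k \<sqinter> perp y))" by simp
  thus ?thesis by (simp add: perp_sup perp_inf)
qed

lemma sasaki_adjunction: "k \<sqinter> (perp k \<squnion> x) \<le> b \<longleftrightarrow> x \<le> perp k \<squnion> (k \<sqinter> b)"
proof
  assume "k \<sqinter> (perp k \<squnion> x) \<le> b"
  hence h: "k \<sqinter> (perp k \<squnion> x) \<le> k \<sqinter> b" by simp
  have "perp k \<squnion> x = perp k \<squnion> (k \<sqinter> (perp k \<squnion> x))"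
    using orthomodular_law[of "perp k" "perp k \<squnion> x"] by simp
  hence "x \<le> perp k \<squnion> (k \<sqinter> (perp k \<squnion> x))" by (metis sup.cobounded2)
  also have "\<dots> \<le> perp k \<squnion> (k \<sqinter> b)" using h sup.mono by blast
  finally show "x \<le> perp k \<squnion> (k \<sqinter> b)" .
next
  assume "x \<le> perp k \<squnion> (k \<sqinter> b)"
  hence "k \<sqinter> (perp k \<squnion> x) \<le> k \<sqinter> (perp k \<squnion> (k \<sqinter> b))"
    by (intro inf_mono order_refl sup_least sup_ge1)
  also have "\<dots> = k \<sqinter> b" using orthomodular_law_dual[of "k \<sqinter> b" k] by simp
  finally show "k \<sqinter> (perp k \<squnion> x) \<le> b" by simp
qed

end

section \<open>The Sasaki map and the bracket\<close>

text \<open>The common component x \<mapsto> k \<supset> x^\<perp> of the bracket [s], where k = s^*(1).\<close>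
definition sasaki_map :: "('a::bounded_lattice \<Rightarrow> 'a) \<Rightarrow> 'a \<Rightarrow> 'a \<Rightarrow> 'a" where
  "sasaki_map perp k x = perp k \<squnion> (k \<sqinter> perp x)"

context
  fixes perp :: "'a::bounded_lattice \<Rightarrow> 'a"
  assumes OM: "orthomodular perp"
begin

lemma perp_sasaki_map: "perp (sasaki_map perp k z) = k \<sqinter> (perp k \<squnion> z)"
  by (simp add: OM sasaki_map_def perp_sup perp_inf)

lemma sasaki_map_galois: "y \<le> sasaki_map perp k x \<longleftrightarrow> x \<le> sasaki_map perp k y"
proof -
  have "y \<le> sasaki_map perp k x \<longleftrightarrow> perp (sasaki_map perp k x) \<le> perp y"
    by (simp add: OM perp_le_perp_iff)
  also have "\<dots> \<longleftrightarrow> x \<le> perp k \<squnion> (k \<sqinter> perp y)"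
    by (simp add: perp_sasaki_map sasaki_adjunction[OF OM])
  finally show ?thesis by (simp add: sasaki_map_def)
qed

text \<open>B \<circ> perp \<circ> B = B: the pair (B, B) is idempotent under OMLatGal composition.\<close>
lemma sasaki_map_idem: "sasaki_map perp k (perp (sasaki_map perp k x)) = sasaki_map perp k x"
proof -
  have "k \<sqinter> (perp k \<squnion> (k \<sqinter> perp x)) = k \<sqinter> perp x"
    using orthomodular_law_dual[OF OM, of "k \<sqinter> perp x" k] by simp
  thus ?thesis by (simp add: OM sasaki_map_def perp_sasaki_map perp_inf perp_sup)
qed

lemma sasaki_map_fix:
  assumes "perp k \<le> a"
  shows "sasaki_map perp k (perp a) = a"
proof -
  have "a = perp k \<squnion> (perp (perp k) \<sqinter> a)" by (rule orthomodular_law[OF OM assms])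
  thus ?thesis by (simp add: OM sasaki_map_def)
qed

lemma perp_sasaki_map_le:
  assumes "perp k \<le> a"
  shows "perp (sasaki_map perp k z) \<le> a \<longleftrightarrow> z \<le> a"
proof -
  have "perp (sasaki_map perp k z) \<le> a \<longleftrightarrow> z \<le> sasaki_map perp k (perp a)"
    unfolding perp_sasaki_map by (simp add: OM sasaki_adjunction sasaki_map_def)
  thus ?thesis by (simp add: sasaki_map_fix[OF assms])
qed

lemma foulis_bracket_eq:
  "foulis_bracket perp s = (sasaki_map perp (snd s top), sasaki_map perp (snd s top))"
  by (simp add: OM foulis_bracket_def omgal_comp_def omgal_ker_def omgal_dagger_def
      downset_perp_def omgal_ker_elem_def sasaki_map_def perp_inf perp_sup fun_eq_iff)

lemma foulis_bracket_hom: "foulis_bracket perp s \<in> omgal_hom"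
  by (simp add: omgal_hom_iff foulis_bracket_eq sasaki_map_galois)

lemma foulis_bracket_projection:
  "omgal_comp perp (foulis_bracket perp s) (foulis_bracket perp s) = foulis_bracket perp s"
  "omgal_dagger (foulis_bracket perp s) = foulis_bracket perp s"
  by (simp_all add: foulis_bracket_eq omgal_comp_def omgal_dagger_def fun_eq_iff sasaki_map_idem)

lemma foulis_bracket_id: "foulis_bracket perp (omgal_id perp) = (\<lambda>_. top, \<lambda>_. top)"
  by (simp add: OM foulis_bracket_eq omgal_id_def sasaki_map_def fun_eq_iff)

section \<open>The endomorphism monoid\<close>

lemma omgal_id_hom: "omgal_id perp \<in> omgal_hom"
  by (simp add: omgal_hom_iff omgal_id_def le_perp_iff[OF OM])

lemma omgal_comp_hom:
  "f \<in> omgal_hom \<Longrightarrow> g \<in> omgal_hom \<Longrightarrow> omgal_comp perp g f \<in> omgal_hom"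
  by (simp add: omgal_hom_iff omgal_comp_def) (metis OM le_perp_iff perp_perp)

lemma omgal_comp_id:
  "omgal_comp perp (omgal_id perp) s = s" "omgal_comp perp s (omgal_id perp) = s"
  by (simp_all add: OM omgal_comp_def omgal_id_def comp_def)

lemma omgal_comp_zero:
  assumes "s \<in> omgal_hom"
  shows "omgal_comp perp (foulis_bracket perp (omgal_id perp)) s = foulis_bracket perp (omgal_id perp)"
    "omgal_comp perp s (foulis_bracket perp (omgal_id perp)) = foulis_bracket perp (omgal_id perp)"
  using omgal_hom_bot[OF assms]
  by (simp_all add: OM foulis_bracket_id omgal_comp_def comp_def)

section \<open>Kernels: axiom (4)\<close>

lemma omgal_comp_eq_zero_iff:
  assumes s: "s \<in> omgal_hom" and x: "x \<in> omgal_hom"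
  shows "omgal_comp perp s x = foulis_bracket perp (omgal_id perp)
     \<longleftrightarrow> perp (snd s top) \<le> fst x top"
proof
  assume "omgal_comp perp s x = foulis_bracket perp (omgal_id perp)"
  hence "fst s (perp (fst x top)) = top"
    by (auto simp: foulis_bracket_id omgal_comp_def dest: fun_cong[where x = top])
  hence "perp (fst x top) \<le> snd s top" using omgal_hom_galois[OF s] by (metis order_refl)
  thus "perp (snd s top) \<le> fst x top" by (metis OM perp_antitone perp_perp)
next
  assume h: "perp (snd s top) \<le> fst x top"
  have "perp (snd s top) \<le> fst x z" for z
    using h omgal_hom_top_le(1)[OF x] by (rule order_trans)
  hence "perp (fst x z) \<le> snd s top" for z by (metis OM perp_antitone perp_perp)
  hence 1: "fst s (perp (fst x z)) = top" for z
    using omgal_hom_galois[OF s] by (metis top_unique)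
  have "perp (snd s z) \<le> fst x top" for z
    using perp_antitone[OF OM omgal_hom_top_le(2)[OF s]] h by (rule order_trans)
  hence 2: "snd x (perp (snd s z)) = top" for z
    using omgal_hom_galois[OF x] by (metis top_unique)
  show "omgal_comp perp s x = foulis_bracket perp (omgal_id perp)"
    using 1 2 by (auto simp: foulis_bracket_id omgal_comp_def)
qed

lemma foulis_bracket_absorb:
  fixes x :: "('b::bounded_lattice \<Rightarrow> 'a) \<times> ('a \<Rightarrow> 'b)"
  assumes x: "x \<in> omgal_hom" and h: "perp (snd s top) \<le> fst x top"
  shows "omgal_comp perp (foulis_bracket perp s) x = x"
proof -
  define k where "k = snd s top"
  have hz: "perp k \<le> fst x z" for z
    using h omgal_hom_top_le(1)[OF x] unfolding k_def by (rule order_trans)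
  have snd_eq: "snd x (perp (sasaki_map perp k z)) = snd x z" for z
  proof (rule antisym)
    have "perp (sasaki_map perp k z) \<le> fst x (snd x (perp (sasaki_map perp k z)))"
      using omgal_hom_galois[OF x] by blast
    hence "z \<le> fst x (snd x (perp (sasaki_map perp k z)))" using perp_sasaki_map_le hz by blast
    thus "snd x (perp (sasaki_map perp k z)) \<le> snd x z" using omgal_hom_galois[OF x] by blast
    have "z \<le> fst x (snd x z)" using omgal_hom_galois[OF x] by blast
    hence "perp (sasaki_map perp k z) \<le> fst x (snd x z)" using perp_sasaki_map_le hz by blast
    thus "snd x z \<le> snd x (perp (sasaki_map perp k z))" using omgal_hom_galois[OF x] by blast
  qed
  show ?thesis
    using sasaki_map_fix[OF hz] snd_eq
    by (cases x) (auto simp: foulis_bracket_eq omgal_comp_def k_def comp_def)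
qed

lemma foulis_bracket_comp_top: "perp (snd s top) \<le> fst (omgal_comp perp (foulis_bracket perp s) y) top"
  by (simp add: foulis_bracket_eq omgal_comp_def sasaki_map_def)

lemma foulis_kernel_axiom:
  assumes s: "s \<in> omgal_hom" and x: "x \<in> omgal_hom"
  shows "omgal_comp perp s x = foulis_bracket perp (omgal_id perp)
     \<longleftrightarrow> (\<exists>y\<in>omgal_hom. x = omgal_comp perp (foulis_bracket perp s) y)"
  using omgal_comp_eq_zero_iff[OF s x] foulis_bracket_absorb[OF x, of s]
    foulis_bracket_comp_top[of s] x by metis

end

theorem mainTheorem15:
  fixes perp :: "'a::bounded_lattice \<Rightarrow> 'a"
  assumes "orthomodular perp"
  shows "foulis_semigroup (omgal_End :: (('a \<Rightarrow> 'a) \<times> ('a \<Rightarrow> 'a)) set)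
           (omgal_comp perp) (omgal_id perp) omgal_dagger (foulis_bracket perp)
       \<and> (\<forall>s \<in> (omgal_End :: (('a \<Rightarrow> 'a) \<times> ('a \<Rightarrow> 'a)) set). \<forall>x.
            fst (foulis_bracket perp s) x = perp (snd s top) \<squnion> (snd s top \<sqinter> perp x)
          \<and> snd (foulis_bracket perp s) x = perp (snd s top) \<squnion> (snd s top \<sqinter> perp x)
          \<and> fst (foulis_bracket perp s) x = sasaki_imp perp (snd s top) (perp x)
          \<and> fst (foulis_bracket perp s) x = perp (and_then perp x (snd s top)))"
proof
  show "foulis_semigroup (omgal_End :: (('a \<Rightarrow> 'a) \<times> ('a \<Rightarrow> 'a)) set)
           (omgal_comp perp) (omgal_id perp) omgal_dagger (foulis_bracket perp)"
    unfolding foulis_semigroup_def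
    by (simp add: assms omgal_id_hom omgal_comp_hom omgal_comp_assoc omgal_comp_id
        omgal_dagger_hom foulis_bracket_hom omgal_dagger_id omgal_dagger_comp
        omgal_dagger_dagger foulis_bracket_projection omgal_comp_zero foulis_kernel_axiom)
  show "\<forall>s \<in> (omgal_End :: (('a \<Rightarrow> 'a) \<times> ('a \<Rightarrow> 'a)) set). \<forall>x.
            fst (foulis_bracket perp s) x = perp (snd s top) \<squnion> (snd s top \<sqinter> perp x)
          \<and> snd (foulis_bracket perp s) x = perp (snd s top) \<squnion> (snd s top \<sqinter> perp x)
          \<and> fst (foulis_bracket perp s) x = sasaki_imp perp (snd s top) (perp x)
          \<and> fst (foulis_bracket perp s) x = perp (and_then perp x (snd s top))"
    by (simp add: assms foulis_bracket_eq[OF assms] sasaki_map_def sasaki_imp_def and_then_def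
        perp_inf perp_sup)
qed

end
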